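(* Let $X_M^{(0)}, X_S^{(0)}$ be scalar random variables such that $[X_M^{(0)},X_S^{(0)}]$ is bivariate normal with mean zero, unit variances and covariance $\rho$. Let $X_S^{(t)}$ and $X_S^{(t+1)}$ be generated from $X_S^{(0)}$ by a forward noising process (independent of $X_M^{(0)}$ given $X_S^{(0)}$, and with $X_S^{(t+1)}$ independent of $(X_S^{(0)},X_M^{(0)})$ given $X_S^{(t)}$) with $q(X_S^{(t)}\mid X_S^{(0)})=\mathcal{N}(\sqrt{\bar\alpha_t}\,X_S^{(0)},1-\bar\alpha_t)$ and $q(X_S^{(t+1)}\mid X_S^{(t)})=\mathcal{N}(\sqrt{1-\beta_{t+1}}\,X_S^{(t)},\beta_{t+1})$, where $\beta_{t+1},\bar\alpha_t\in(0,1)$. Then $$\mathbb{E}\,\mathrm{KL}\Big(q(X_S^{(t)}\mid X_S^{(t+1)},X_M^{(0)})\,\Big\|\,q(X_S^{(t)}\mid X_S^{(t+1)})\Big)\ \ge\ -\tfrac12\Big(\log(1-\beta_{t+1}\bar\alpha_t\rho^2)+\beta_{t+1}\bar\alpha_t\rho^2\Big),$$ where the expectation is over the joint law of $(X_M^{(0)},X_S^{(t+1)})$.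
   Context: $\mathrm{KL}(f\|g)=\int f\log(f/g)$ with natural logarithm; $q(\cdot\mid\cdot)$ denotes conditional densities under the joint law of the described random variables. *)

theory Defs
  imports "HOL-Probability.Probability"
begin

definition gauss :: "real \<Rightarrow> real \<Rightarrow> real measure" where
  "gauss \<mu> v = density lborel (\<lambda>x. ennreal (normal_density \<mu> (sqrt v) x))"

text \<open>Law of [X_M, X_S] bivariate normal, mean zero, unit variances, covariance rho
  (|rho| <= 1), realised as a linear image of two independent standard normals,
  so that the degenerate case |rho| = 1 is included.\<close>
definition bivariate_std_normal :: "real \<Rightarrow> (real \<times> real) measure" where
  "bivariate_std_normal \<rho> =
     distr (gauss 0 1 \<Otimes>\<^sub>M gauss 0 1) borel
       (\<lambda>(z1, z2). (z1, \<rho> * z1 + sqrt (1 - \<rho>\<^sup>2) * z2))"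

definition model_law :: "real \<Rightarrow> real \<Rightarrow> real \<Rightarrow> (real \<times> real \<times> real \<times> real) measure" where
  "model_law \<rho> abar \<beta> =
     bind (bivariate_std_normal \<rho>) (\<lambda>(m, s0).
       bind (gauss (sqrt abar * s0) (1 - abar)) (\<lambda>st.
         bind (gauss (sqrt (1 - \<beta>) * st) \<beta>) (\<lambda>st1.
           return borel (m, s0, st, st1))))"

definition cond_dens_full :: "(real \<times> real \<times> real \<Rightarrow> ennreal) \<Rightarrow> real \<Rightarrow> real \<Rightarrow> real \<Rightarrow> real" where
  "cond_dens_full f st st1 m =
     enn2real (f (st, st1, m)) / (\<integral>s. enn2real (f (s, st1, m)) \<partial>lborel)"

definition cond_dens_marg :: "(real \<times> real \<times> real \<Rightarrow> ennreal) \<Rightarrow> real \<Rightarrow> real \<Rightarrow> real" where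
  "cond_dens_marg f st st1 =
     (\<integral>m. enn2real (f (st, st1, m)) \<partial>lborel) /
     (\<integral>s. (\<integral>m. enn2real (f (s, st1, m)) \<partial>lborel) \<partial>lborel)"

definition kl_div :: "(real \<Rightarrow> real) \<Rightarrow> (real \<Rightarrow> real) \<Rightarrow> real" where
  "kl_div p q = (\<integral>x. p x * ln (p x / q x) \<partial>lborel)"

end

(* Integrating out X_S^0 (which also covers the degenerate case |rho| = 1), the
   density of (X_S^t, X_S^{t+1}, X_M^0) is a product of three Gaussian densities.
   Completing the square in two ways shows that q(X_S^t | X_S^{t+1} = y, X_M^0 = m)
   is N(post_mean y m, post_var) and q(X_S^t | X_S^{t+1} = y) is N(sqrt(1 - beta) y, beta),
   so for almost every (y, m) the KL divergence is the explicit Gaussian one,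
   a constant plus a nonnegative quadratic in (y, m).  The constant is bounded below
   by the right-hand side via monotonicity of ln r + 1/r on [1, oo), and the quadratic
   is integrable because X_M^0 and X_S^{t+1} are standard normal. *)
theory Submission
  imports Defs
begin

section \<open>Gaussian densities\<close>

definition gauss_dens :: "real \<Rightarrow> real \<Rightarrow> real \<Rightarrow> real" where
  "gauss_dens \<mu> v x = normal_density \<mu> (sqrt v) x"

lemma gauss_dens_eq:
  "0 < v \<Longrightarrow> gauss_dens \<mu> v x = exp (-(x - \<mu>)\<^sup>2 / (2 * v)) / sqrt (2 * pi * v)"
  by (simp add: gauss_dens_def normal_density_def)

lemma gauss_dens_pos: "0 < v \<Longrightarrow> 0 < gauss_dens \<mu> v x"
  by (simp add: gauss_dens_def normal_density_pos)

lemma gauss_dens_nonneg [simp]: "0 \<le> gauss_dens \<mu> v x"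
  by (simp add: gauss_dens_def)

lemma borel_measurable_gauss_dens [measurable]:
  assumes [measurable]: "f \<in> borel_measurable M" "h \<in> borel_measurable M"
  shows "(\<lambda>x. gauss_dens (f x) v (h x)) \<in> borel_measurable M"
  unfolding gauss_dens_def normal_density_def by measurable

text \<open>Bayes' rule for a linear-Gaussian pair: if \<open>x \<sim> N(\<mu>\<^sub>1, v\<^sub>1)\<close> and
  \<open>y | x \<sim> N(\<alpha> + k x, v\<^sub>2)\<close>, the joint density factors through the marginal of \<open>y\<close>
  and the posterior of \<open>x\<close> given \<open>y\<close>.\<close>
lemma gauss_dens_bayes:
  assumes v1: "0 < v1" and v2: "0 < v2"
  shows "gauss_dens \<mu>1 v1 x * gauss_dens (\<alpha> + k * x) v2 y =
    gauss_dens (\<alpha> + k * \<mu>1) (v2 + k\<^sup>2 * v1) y *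
    gauss_dens (\<mu>1 + k * v1 * (y - \<alpha> - k * \<mu>1) / (v2 + k\<^sup>2 * v1)) (v1 * v2 / (v2 + k\<^sup>2 * v1)) x"
proof -
  define V where "V = v2 + k\<^sup>2 * v1"
  have V: "0 < V" using v1 v2 by (simp add: V_def add_pos_nonneg)
  have w: "0 < v1 * v2 / V" using v1 v2 V by simp
  have normalisation: "sqrt (2 * pi * v1) * sqrt (2 * pi * v2) = sqrt (2 * pi * V) * sqrt (2 * pi * (v1 * v2 / V))"
    using V v1 v2 by (simp add: real_sqrt_mult[symmetric] field_simps)
  have exponent: "-(x - \<mu>1)\<^sup>2 / (2 * v1) + -(y - (\<alpha> + k * x))\<^sup>2 / (2 * v2) =
     -(y - (\<alpha> + k * \<mu>1))\<^sup>2 / (2 * V) + -(x - (\<mu>1 + k * v1 * (y - \<alpha> - k * \<mu>1) / V))\<^sup>2 / (2 * (v1 * v2 / V))"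
  proof -
    have "V \<noteq> 0" "v1 \<noteq> 0" "v2 \<noteq> 0" using V v1 v2 by auto
    then show ?thesis
      by (simp add: divide_simps) (use V_def in algebra)
  qed
  have "gauss_dens \<mu>1 v1 x * gauss_dens (\<alpha> + k * x) v2 y =
      exp (-(x - \<mu>1)\<^sup>2 / (2 * v1) + -(y - (\<alpha> + k * x))\<^sup>2 / (2 * v2)) / (sqrt (2 * pi * v1) * sqrt (2 * pi * v2))"
    by (simp add: gauss_dens_eq v1 v2 mult_exp_exp)
  also have "\<dots> = exp (-(y - (\<alpha> + k * \<mu>1))\<^sup>2 / (2 * V) + -(x - (\<mu>1 + k * v1 * (y - \<alpha> - k * \<mu>1) / V))\<^sup>2 / (2 * (v1 * v2 / V)))
      / (sqrt (2 * pi * V) * sqrt (2 * pi * (v1 * v2 / V)))"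
    by (simp only: exponent normalisation)
  also have "\<dots> = gauss_dens (\<alpha> + k * \<mu>1) V y * gauss_dens (\<mu>1 + k * v1 * (y - \<alpha> - k * \<mu>1) / V) (v1 * v2 / V) x"
    by (simp add: gauss_dens_eq V w mult_exp_exp)
  finally show ?thesis unfolding V_def .
qed

lemma integral_gauss_dens: "0 < v \<Longrightarrow> (\<integral>x. gauss_dens \<mu> v x \<partial>lborel) = 1"
  unfolding gauss_dens_def by (rule integral_normal_density) simp

lemma integrable_gauss_dens: "0 < v \<Longrightarrow> integrable lborel (gauss_dens \<mu> v)"
  unfolding gauss_dens_def[abs_def] by (rule integrable_normal_density) simp

lemma nn_integral_gauss_dens: "0 < v \<Longrightarrow> (\<integral>\<^sup>+x. ennreal (gauss_dens \<mu> v x) \<partial>lborel) = 1"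
  by (subst nn_integral_eq_integral) (auto simp: integral_gauss_dens integrable_gauss_dens)

lemma nn_integral_gauss_dens_cmult:
  "0 < v \<Longrightarrow> 0 \<le> c \<Longrightarrow> (\<integral>\<^sup>+x. ennreal (c * gauss_dens \<mu> v x) \<partial>lborel) = ennreal c"
  by (simp add: ennreal_mult' nn_integral_cmult nn_integral_gauss_dens)

lemma nn_integral_std_gauss_dens_second_moment:
  "(\<integral>\<^sup>+x. ennreal (gauss_dens 0 1 x * x\<^sup>2) \<partial>lborel) = 1"
proof -
  have "has_bochner_integral lborel (\<lambda>x. gauss_dens 0 1 x * x\<^sup>2) 1"
    using normal_moment_even[of 1 0 1] by (simp add: gauss_dens_def)
  then show ?thesis
    by (subst nn_integral_eq_integral) (auto simp: has_bochner_integral_iff)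
qed

lemma kl_gauss_dens:
  assumes v1: "0 < v1" and v2: "0 < v2"
  shows "(\<integral>x. gauss_dens \<mu>1 v1 x * ln (gauss_dens \<mu>1 v1 x / gauss_dens \<mu>2 v2 x) \<partial>lborel)
     = (ln (v2 / v1) + (v1 + (\<mu>1 - \<mu>2)\<^sup>2) / v2 - 1) / 2"
proof -
  define C where "C = ln (v2 / v1) / 2"
  have sd: "sqrt v1 > 0" using v1 by auto
  have integrand: "gauss_dens \<mu>1 v1 x * ln (gauss_dens \<mu>1 v1 x / gauss_dens \<mu>2 v2 x) =
     gauss_dens \<mu>1 v1 x * (C + (\<mu>1 - \<mu>2)\<^sup>2 / (2 * v2))
     + gauss_dens \<mu>1 v1 x * (x - \<mu>1) ^ (2 * 1) * (1 / (2 * v2) - 1 / (2 * v1))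
     + gauss_dens \<mu>1 v1 x * (x - \<mu>1) ^ (2 * 0 + 1) * ((\<mu>1 - \<mu>2) / v2)" for x
  proof -
    have "ln (gauss_dens \<mu>1 v1 x / gauss_dens \<mu>2 v2 x) =
        ln (sqrt (2 * pi * v2) / sqrt (2 * pi * v1)) - (x - \<mu>1)\<^sup>2 / (2 * v1) + (x - \<mu>2)\<^sup>2 / (2 * v2)"
      using v1 v2 by (simp add: gauss_dens_eq ln_div ln_mult)
    also have "ln (sqrt (2 * pi * v2) / sqrt (2 * pi * v1)) = C"
      using v1 v2 unfolding C_def by (simp add: real_sqrt_divide[symmetric] ln_sqrt)
    finally have ln_ratio: "ln (gauss_dens \<mu>1 v1 x / gauss_dens \<mu>2 v2 x) =
        C - (x - \<mu>1)\<^sup>2 / (2 * v1) + (x - \<mu>2)\<^sup>2 / (2 * v2)" .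
    show ?thesis unfolding ln_ratio using v1 v2 by (simp add: field_simps power2_eq_square)
  qed
  have "has_bochner_integral lborel (\<lambda>x. gauss_dens \<mu>1 v1 x * (C + (\<mu>1 - \<mu>2)\<^sup>2 / (2 * v2)))
      (1 * (C + (\<mu>1 - \<mu>2)\<^sup>2 / (2 * v2)))"
    by (rule has_bochner_integral_mult_left)
      (use integral_gauss_dens[OF v1] integrable_gauss_dens[OF v1] in \<open>auto simp: has_bochner_integral_iff\<close>)
  moreover have "has_bochner_integral lborel (\<lambda>x. gauss_dens \<mu>1 v1 x * (x - \<mu>1) ^ (2 * 1) * (1 / (2 * v2) - 1 / (2 * v1)))
      (v1 * (1 / (2 * v2) - 1 / (2 * v1)))"
    using has_bochner_integral_mult_left[OF normal_moment_even[OF sd, of \<mu>1 1]] v1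
    by (simp add: gauss_dens_def)
  moreover have "has_bochner_integral lborel (\<lambda>x. gauss_dens \<mu>1 v1 x * (x - \<mu>1) ^ (2 * 0 + 1) * ((\<mu>1 - \<mu>2) / v2))
      (0 * ((\<mu>1 - \<mu>2) / v2))"
    unfolding gauss_dens_def by (rule has_bochner_integral_mult_left[OF normal_moment_odd[OF sd]])
  ultimately have "has_bochner_integral lborel (\<lambda>x. gauss_dens \<mu>1 v1 x * ln (gauss_dens \<mu>1 v1 x / gauss_dens \<mu>2 v2 x))
     (1 * (C + (\<mu>1 - \<mu>2)\<^sup>2 / (2 * v2)) + v1 * (1 / (2 * v2) - 1 / (2 * v1)) + 0 * ((\<mu>1 - \<mu>2) / v2))"
    unfolding integrand by (intro has_bochner_integral_add)
  then show ?thesis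
    using v1 v2 unfolding C_def by (simp add: has_bochner_integral_integral_eq field_simps)
qed

section \<open>Iterated Lebesgue integrals on \<open>\<real>\<^sup>2\<close> and \<open>\<real>\<^sup>3\<close>\<close>

lemma lborel_real2_eq_pair: "(lborel :: (real \<times> real) measure) = lborel \<Otimes>\<^sub>M lborel"
  by (rule lborel_prod[symmetric])

lemma lborel_real3_eq_pair: "(lborel :: (real \<times> real \<times> real) measure) = lborel \<Otimes>\<^sub>M lborel"
  by (rule lborel_prod[symmetric])

lemma borel_measurable_nn_integral_lborel:
  fixes f :: "'a \<Rightarrow> real \<Rightarrow> ennreal"
  assumes "(\<lambda>p. f (fst p) (snd p)) \<in> borel_measurable (N \<Otimes>\<^sub>M borel)"
  shows "(\<lambda>x. \<integral>\<^sup>+y. f x y \<partial>lborel) \<in> borel_measurable N"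
proof -
  have "case_prod f \<in> borel_measurable (N \<Otimes>\<^sub>M lborel)"
    using assms by (simp add: case_prod_beta' measurable_cong_sets[OF sets_pair_measure_cong[OF refl sets_lborel] refl])
  then show ?thesis by (rule lborel.borel_measurable_nn_integral)
qed

lemma borel_measurable_integral_lborel:
  fixes f :: "'a \<Rightarrow> real \<Rightarrow> real"
  assumes "(\<lambda>p. f (fst p) (snd p)) \<in> borel_measurable (N \<Otimes>\<^sub>M borel)"
  shows "(\<lambda>x. \<integral>y. f x y \<partial>lborel) \<in> borel_measurable N"
proof -
  have "case_prod f \<in> borel_measurable (N \<Otimes>\<^sub>M lborel)"
    using assms by (simp add: case_prod_beta' measurable_cong_sets[OF sets_pair_measure_cong[OF refl sets_lborel] refl])
  then show ?thesis by (rule lborel.borel_measurable_lebesgue_integral)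
qed

lemma nn_integral_lborel_swap:
  fixes H :: "real \<Rightarrow> real \<Rightarrow> ennreal"
  assumes "(\<lambda>p. H (fst p) (snd p)) \<in> borel_measurable borel"
  shows "(\<integral>\<^sup>+x. \<integral>\<^sup>+y. H x y \<partial>lborel \<partial>lborel) = (\<integral>\<^sup>+y. \<integral>\<^sup>+x. H x y \<partial>lborel \<partial>lborel)"
proof -
  have "case_prod H \<in> borel_measurable (lborel \<Otimes>\<^sub>M lborel)"
    unfolding lborel_real2_eq_pair[symmetric] using assms by (simp add: case_prod_beta')
  then show ?thesis by (rule lborel_pair.Fubini'[symmetric])
qed

lemma nn_integral_lborel_triple:
  fixes G :: "real \<times> real \<times> real \<Rightarrow> ennreal"
  assumes [measurable]: "G \<in> borel_measurable borel"
  shows "(\<integral>\<^sup>+x. G x \<partial>lborel) = (\<integral>\<^sup>+s. \<integral>\<^sup>+y. \<integral>\<^sup>+m. G (s, y, m) \<partial>lborel \<partial>lborel \<partial>lborel)"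
proof -
  have "G \<in> borel_measurable (lborel \<Otimes>\<^sub>M lborel)"
    unfolding lborel_real3_eq_pair[symmetric] by simp
  then have "(\<integral>\<^sup>+x. G x \<partial>lborel) = (\<integral>\<^sup>+s. \<integral>\<^sup>+p. G (s, p) \<partial>lborel \<partial>lborel)"
    by (subst lborel_real3_eq_pair) (rule lborel.nn_integral_fst[symmetric])
  also have "\<dots> = (\<integral>\<^sup>+s. \<integral>\<^sup>+y. \<integral>\<^sup>+m. G (s, y, m) \<partial>lborel \<partial>lborel \<partial>lborel)"
  proof (intro nn_integral_cong)
    fix s
    have "(\<lambda>p. G (s, p)) \<in> borel_measurable (lborel \<Otimes>\<^sub>M lborel)"
      unfolding lborel_real2_eq_pair[symmetric] by simp
    then show "(\<integral>\<^sup>+p. G (s, p) \<partial>lborel) = (\<integral>\<^sup>+y. \<integral>\<^sup>+m. G (s, y, m) \<partial>lborel \<partial>lborel)"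
      by (subst lborel_real2_eq_pair) (rule lborel.nn_integral_fst[symmetric])
  qed
  finally show ?thesis .
qed

lemma nn_integral_lborel_triple_312:
  fixes G :: "real \<times> real \<times> real \<Rightarrow> ennreal"
  assumes G: "G \<in> borel_measurable borel"
  shows "(\<integral>\<^sup>+x. G x \<partial>lborel) = (\<integral>\<^sup>+m. \<integral>\<^sup>+s. \<integral>\<^sup>+y. G (s, y, m) \<partial>lborel \<partial>lborel \<partial>lborel)"
proof -
  have [measurable]: "G \<in> borel_measurable (borel \<Otimes>\<^sub>M (borel \<Otimes>\<^sub>M borel))"
    unfolding borel_prod by (rule G)
  have "(\<integral>\<^sup>+x. G x \<partial>lborel) = (\<integral>\<^sup>+s. \<integral>\<^sup>+y. \<integral>\<^sup>+m. G (s, y, m) \<partial>lborel \<partial>lborel \<partial>lborel)"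
    by (rule nn_integral_lborel_triple) (rule G)
  also have "\<dots> = (\<integral>\<^sup>+s. \<integral>\<^sup>+m. \<integral>\<^sup>+y. G (s, y, m) \<partial>lborel \<partial>lborel \<partial>lborel)"
    by (intro nn_integral_cong nn_integral_lborel_swap) (unfold borel_prod[symmetric], measurable)
  also have "\<dots> = (\<integral>\<^sup>+m. \<integral>\<^sup>+s. \<integral>\<^sup>+y. G (s, y, m) \<partial>lborel \<partial>lborel \<partial>lborel)"
    by (rule nn_integral_lborel_swap, unfold borel_prod[symmetric])
      (rule borel_measurable_nn_integral_lborel, measurable)
  finally show ?thesis .
qed

lemma nn_integral_lborel_triple_213:
  fixes G :: "real \<times> real \<times> real \<Rightarrow> ennreal"
  assumes G: "G \<in> borel_measurable borel"
  shows "(\<integral>\<^sup>+x. G x \<partial>lborel) = (\<integral>\<^sup>+y. \<integral>\<^sup>+s. \<integral>\<^sup>+m. G (s, y, m) \<partial>lborel \<partial>lborel \<partial>lborel)"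
proof -
  have [measurable]: "G \<in> borel_measurable (borel \<Otimes>\<^sub>M (borel \<Otimes>\<^sub>M borel))"
    unfolding borel_prod by (rule G)
  have "(\<integral>\<^sup>+x. G x \<partial>lborel) = (\<integral>\<^sup>+s. \<integral>\<^sup>+y. \<integral>\<^sup>+m. G (s, y, m) \<partial>lborel \<partial>lborel \<partial>lborel)"
    by (rule nn_integral_lborel_triple) (rule G)
  also have "\<dots> = (\<integral>\<^sup>+y. \<integral>\<^sup>+s. \<integral>\<^sup>+m. G (s, y, m) \<partial>lborel \<partial>lborel \<partial>lborel)"
    by (rule nn_integral_lborel_swap, unfold borel_prod[symmetric])
      (rule borel_measurable_nn_integral_lborel, measurable)
  finally show ?thesis .
qed

lemma AE_lborel_swap:
  fixes P :: "real \<Rightarrow> real \<Rightarrow> bool"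
  assumes "Measurable.pred borel (\<lambda>p. P (fst p) (snd p))"
  shows "(AE x in lborel. AE y in lborel. P x y) \<longleftrightarrow> (AE y in lborel. AE x in lborel. P x y)"
proof -
  have "{x \<in> space (lborel \<Otimes>\<^sub>M lborel). P (fst x) (snd x)} \<in> sets (lborel \<Otimes>\<^sub>M (lborel :: real measure))"
    unfolding lborel_real2_eq_pair[symmetric] using assms by (simp add: pred_def)
  then show ?thesis by (rule lborel_pair.AE_commute)
qed

lemma AE_lborel_triple_D:
  fixes P :: "real \<times> real \<times> real \<Rightarrow> bool"
  assumes [measurable]: "Measurable.pred borel P"
    and "AE x in lborel. P x"
  shows "AE y in lborel. AE m in lborel. AE s in lborel. P (s, y, m)"
proof -
  have "AE x in lborel \<Otimes>\<^sub>M lborel. P x" using assms(2) unfolding lborel_real3_eq_pair .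
  then have "AE s in lborel. AE p in lborel. P (s, p)" by (rule lborel_pair.AE_pair)
  moreover have "{x \<in> space (lborel \<Otimes>\<^sub>M lborel). P (fst x, snd x)} \<in> sets (lborel \<Otimes>\<^sub>M (lborel :: (real \<times> real) measure))"
    unfolding lborel_real3_eq_pair[symmetric] by (simp add: pred_def)
  ultimately have "AE p in lborel. AE s in lborel. P (s, p)"
    using lborel_pair.AE_commute[of "\<lambda>s p. P (s, p)"] by simp
  then have "AE p in lborel \<Otimes>\<^sub>M lborel. AE s in lborel. P (s, p)" unfolding lborel_real2_eq_pair .
  then show ?thesis by (rule lborel_pair.AE_pair)
qed

lemma AE_lborel_triple_snd_I:
  fixes Q :: "real \<times> real \<Rightarrow> bool"
  assumes [measurable]: "Measurable.pred borel Q"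
    and "AE y in lborel. AE m in lborel. Q (y, m)"
  shows "AE x in (lborel :: (real \<times> real \<times> real) measure). Q (snd x)"
proof -
  have "{x \<in> space (lborel \<Otimes>\<^sub>M lborel). Q x} \<in> sets (lborel \<Otimes>\<^sub>M (lborel :: real measure))"
    unfolding lborel_real2_eq_pair[symmetric] by (simp add: pred_def)
  then have "AE p in lborel \<Otimes>\<^sub>M lborel. Q p"
    by (rule lborel_pair.AE_pair_measure) (use assms(2) in simp)
  then have Q: "AE p in lborel. Q p" unfolding lborel_real2_eq_pair[symmetric] .
  have "{x \<in> space ((lborel :: real measure) \<Otimes>\<^sub>M (lborel :: (real \<times> real) measure)). Q (snd x)}
      \<in> sets ((lborel :: real measure) \<Otimes>\<^sub>M (lborel :: (real \<times> real) measure))"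
    by measurable
  then have "AE x in (lborel :: real measure) \<Otimes>\<^sub>M (lborel :: (real \<times> real) measure). Q (snd x)"
    by (rule lborel_pair.AE_pair_measure) (use Q in simp)
  then show ?thesis unfolding lborel_real3_eq_pair[symmetric] .
qed

section \<open>The Gaussian kernel and the forward model\<close>

lemma gauss_eq_density: "gauss \<mu> v = density lborel (\<lambda>x. ennreal (gauss_dens \<mu> v x))"
  by (simp add: gauss_def gauss_dens_def)

lemma sets_gauss [simp, measurable_cong]: "sets (gauss \<mu> v) = sets borel"
  by (simp add: gauss_def)

lemma space_gauss [simp]: "space (gauss \<mu> v) = UNIV"
  by (simp add: gauss_def)

lemma prob_space_gauss: "0 < v \<Longrightarrow> prob_space (gauss \<mu> v)"
  unfolding gauss_def by (rule prob_space_normal_density) simp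

text \<open>Kernel measurability needs this for every \<open>v\<close>: for \<open>v \<le> 0\<close> the measure is
  zero (\<open>v = 0\<close>) or the normal law with standard deviation \<open>sqrt v < 0\<close>.\<close>
lemma subprob_space_gauss: "subprob_space (gauss \<mu> v)"
proof (cases "v = 0")
  case True
  then have "gauss \<mu> v = density lborel (\<lambda>x. 0)"
    unfolding gauss_def by (simp add: normal_density_def)
  then show ?thesis
    by (intro subprob_spaceI) (auto simp: emeasure_density)
next
  case False
  have "(sqrt v)\<^sup>2 = (sqrt \<bar>v\<bar>)\<^sup>2"
  proof (cases "v \<ge> 0")
    case False
    then have "sqrt v = - sqrt (- v)" by (metis minus_minus real_sqrt_minus)
    then show ?thesis using False by simp
  qed simp
  then have "normal_density \<mu> (sqrt v) = normal_density \<mu> (sqrt \<bar>v\<bar>)"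
    by (auto simp only: fun_eq_iff normal_density_def)
  moreover have "prob_space (density lborel (\<lambda>x. ennreal (normal_density \<mu> (sqrt \<bar>v\<bar>) x)))"
    by (rule prob_space_normal_density) (use False in simp)
  ultimately show ?thesis
    unfolding gauss_def by (simp add: prob_space_imp_subprob_space)
qed

lemma measurable_gauss [measurable]:
  assumes "f \<in> borel_measurable M"
  shows "(\<lambda>x. gauss (f x) v) \<in> measurable M (subprob_algebra borel)"
proof -
  have "(\<lambda>x. gauss x v) \<in> measurable borel (subprob_algebra borel)"
  proof (rule measurable_subprob_algebra)
    fix A :: "real set" assume A: "A \<in> sets borel"
    have "(\<lambda>x. emeasure (gauss x v) A) = (\<lambda>x. \<integral>\<^sup>+y. ennreal (gauss_dens x v y) * indicator A y \<partial>lborel)"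
      using A by (simp add: gauss_eq_density emeasure_density)
    also have "\<dots> \<in> borel_measurable borel"
      using A by measurable
    finally show "(\<lambda>x. emeasure (gauss x v) A) \<in> borel_measurable borel" .
  qed (simp_all add: subprob_space_gauss)
  then show ?thesis
    using measurable_compose[OF assms] by blast
qed

lemma nn_integral_gauss:
  "F \<in> borel_measurable borel \<Longrightarrow>
    (\<integral>\<^sup>+x. F x \<partial>gauss \<mu> v) = (\<integral>\<^sup>+x. ennreal (gauss_dens \<mu> v x) * F x \<partial>lborel)"
  unfolding gauss_eq_density by (subst nn_integral_density) auto

lemma sets_bivariate_std_normal [simp, measurable_cong]: "sets (bivariate_std_normal \<rho>) = sets borel"
  by (simp add: bivariate_std_normal_def)

lemma sets_model_law [simp, measurable_cong]: "sets (model_law \<rho> abar \<beta>) = sets borel"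
  unfolding model_law_def
  by (subst sets_bind[where N=borel]) (auto simp: space_bind sets_bind bivariate_std_normal_def)

lemma nn_integral_bivariate_std_normal:
  fixes G :: "real \<times> real \<Rightarrow> ennreal"
  assumes [measurable]: "G \<in> borel_measurable borel"
  shows "(\<integral>\<^sup>+p. G p \<partial>bivariate_std_normal \<rho>) =
    (\<integral>\<^sup>+z1. \<integral>\<^sup>+z2. ennreal (gauss_dens 0 1 z1) *
       (ennreal (gauss_dens 0 1 z2) * G (z1, \<rho> * z1 + sqrt (1 - \<rho>\<^sup>2) * z2)) \<partial>lborel \<partial>lborel)"
proof -
  have std: "sigma_finite_measure (gauss 0 1)"
    by (intro prob_space_imp_sigma_finite prob_space_gauss) simp
  interpret pair_sigma_finite "gauss 0 1" "gauss 0 1"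
    by (intro pair_sigma_finite.intro std)
  have "(\<integral>\<^sup>+p. G p \<partial>bivariate_std_normal \<rho>) =
     (\<integral>\<^sup>+p. G (fst p, \<rho> * fst p + sqrt (1 - \<rho>\<^sup>2) * snd p) \<partial>(gauss 0 1 \<Otimes>\<^sub>M gauss 0 1))"
    unfolding bivariate_std_normal_def
    by (subst nn_integral_distr) (auto simp: case_prod_beta')
  also have "\<dots> = (\<integral>\<^sup>+z1. \<integral>\<^sup>+z2. G (z1, \<rho> * z1 + sqrt (1 - \<rho>\<^sup>2) * z2) \<partial>gauss 0 1 \<partial>gauss 0 1)"
    by (subst M1.nn_integral_fst[symmetric]) simp_all
  also have "\<dots> = (\<integral>\<^sup>+z1. ennreal (gauss_dens 0 1 z1) *
      (\<integral>\<^sup>+z2. G (z1, \<rho> * z1 + sqrt (1 - \<rho>\<^sup>2) * z2) \<partial>gauss 0 1) \<partial>lborel)"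
    by (rule nn_integral_gauss) measurable
  also have "\<dots> = (\<integral>\<^sup>+z1. \<integral>\<^sup>+z2. ennreal (gauss_dens 0 1 z1) *
      (ennreal (gauss_dens 0 1 z2) * G (z1, \<rho> * z1 + sqrt (1 - \<rho>\<^sup>2) * z2)) \<partial>lborel \<partial>lborel)"
    by (intro nn_integral_cong, subst nn_integral_gauss, measurable, subst nn_integral_cmult) auto
  finally show ?thesis .
qed

lemma nn_integral_model_law:
  fixes F :: "real \<times> real \<times> real \<times> real \<Rightarrow> ennreal"
  assumes [measurable]: "F \<in> borel_measurable borel"
  shows "(\<integral>\<^sup>+x. F x \<partial>model_law \<rho> abar \<beta>) =
    (\<integral>\<^sup>+z1. \<integral>\<^sup>+z2. ennreal (gauss_dens 0 1 z1) * (ennreal (gauss_dens 0 1 z2) *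
       (\<integral>\<^sup>+st. ennreal (gauss_dens (sqrt abar * (\<rho> * z1 + sqrt (1 - \<rho>\<^sup>2) * z2)) (1 - abar) st) *
          (\<integral>\<^sup>+st1. ennreal (gauss_dens (sqrt (1 - \<beta>) * st) \<beta> st1) *
              F (z1, \<rho> * z1 + sqrt (1 - \<rho>\<^sup>2) * z2, st, st1) \<partial>lborel) \<partial>lborel)) \<partial>lborel \<partial>lborel)"
proof -
  define H where "H = (\<lambda>(m, s0). \<integral>\<^sup>+st. ennreal (gauss_dens (sqrt abar * s0) (1 - abar) st) *
    (\<integral>\<^sup>+st1. ennreal (gauss_dens (sqrt (1 - \<beta>) * st) \<beta> st1) * F (m, s0, st, st1) \<partial>lborel) \<partial>lborel)"
  have [measurable]: "(\<lambda>p::real \<times> real \<times> real. \<integral>\<^sup>+st1. ennreal (gauss_dens (sqrt (1 - \<beta>) * snd (snd p)) \<beta> st1) *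
      F (fst p, fst (snd p), snd (snd p), st1) \<partial>lborel) \<in> borel_measurable borel"
    unfolding borel_prod[symmetric] by (rule borel_measurable_nn_integral_lborel) measurable
  have H [measurable]: "H \<in> borel_measurable borel"
    unfolding H_def split_beta' borel_prod[symmetric] by (rule borel_measurable_nn_integral_lborel) measurable
  have kernel: "(\<lambda>(m::real, s0). bind (gauss (sqrt abar * s0) (1 - abar)) (\<lambda>st.
         bind (gauss (sqrt (1 - \<beta>) * st) \<beta>) (\<lambda>st1. return borel (m, s0, st, st1))))
      \<in> measurable (bivariate_std_normal \<rho>) (subprob_algebra borel)"
    by (simp add: measurable_cong_sets[OF sets_bivariate_std_normal refl], unfold borel_prod[symmetric]) measurable
  have inner: "(\<integral>\<^sup>+x. F x \<partial>bind (gauss (sqrt abar * s0) (1 - abar)) (\<lambda>st.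
         bind (gauss (sqrt (1 - \<beta>) * st) \<beta>) (\<lambda>st1. return borel (m, s0, st, st1)))) = H (m, s0)" for m s0
  proof -
    have last_step: "(\<integral>\<^sup>+x. F x \<partial>bind (gauss (sqrt (1 - \<beta>) * st) \<beta>) (\<lambda>st1. return borel (m, s0, st, st1)))
       = (\<integral>\<^sup>+st1. ennreal (gauss_dens (sqrt (1 - \<beta>) * st) \<beta> st1) * F (m, s0, st, st1) \<partial>lborel)" for st
      by (subst nn_integral_bind[where B=borel]) (simp_all add: nn_integral_return nn_integral_gauss)
    show ?thesis
      by (subst nn_integral_bind[where B=borel]) (simp_all add: last_step nn_integral_gauss H_def)
  qed
  have "(\<integral>\<^sup>+x. F x \<partial>model_law \<rho> abar \<beta>) = (\<integral>\<^sup>+p. H p \<partial>bivariate_std_normal \<rho>)"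
    unfolding model_law_def
    by (subst nn_integral_bind[OF _ kernel]) (simp_all add: inner split_beta')
  then show ?thesis
    by (subst (asm) nn_integral_bivariate_std_normal[OF H]) (simp add: H_def)
qed

lemma nn_integral_gauss_dens_convolution:
  assumes "0 < v1" "0 < v2"
  shows "(\<integral>\<^sup>+z. ennreal (gauss_dens \<mu> v1 z * gauss_dens (\<alpha> + k * z) v2 x) \<partial>lborel)
    = ennreal (gauss_dens (\<alpha> + k * \<mu>) (v2 + k\<^sup>2 * v1) x)"
proof -
  have "0 < v1 * v2 / (v2 + k\<^sup>2 * v1)"
    using assms by (simp add: add_pos_nonneg)
  then show ?thesis
    by (simp only: gauss_dens_bayes assms nn_integral_gauss_dens_cmult gauss_dens_nonneg)
qed

text \<open>The density of \<open>(X\<^sub>S\<^sup>t, X\<^sub>S\<^sup>t\<^sup>+\<^sup>1, X\<^sub>M\<^sup>0)\<close>, in the argument order of \<open>f\<close> in the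
  theorem, with \<open>X\<^sub>S\<^sup>0\<close> integrated out.\<close>
definition joint_dens :: "real \<Rightarrow> real \<Rightarrow> real \<Rightarrow> real \<times> real \<times> real \<Rightarrow> real" where
  "joint_dens \<rho> abar \<beta> = (\<lambda>(s, y, m).
     gauss_dens 0 1 m * gauss_dens (sqrt abar * \<rho> * m) (1 - abar * \<rho>\<^sup>2) s * gauss_dens (sqrt (1 - \<beta>) * s) \<beta> y)"

lemma joint_dens_nonneg [simp]: "0 \<le> joint_dens \<rho> abar \<beta> x"
  unfolding joint_dens_def by (auto split: prod.splits)

lemma borel_measurable_joint_dens [measurable]: "joint_dens \<rho> abar \<beta> \<in> borel_measurable borel"
  unfolding joint_dens_def split_beta' borel_prod[symmetric] by measurable

lemma nn_integral_model_law_triple: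
  fixes F :: "real \<times> real \<times> real \<Rightarrow> ennreal"
  assumes F: "F \<in> borel_measurable borel"
    and \<rho>: "\<bar>\<rho>\<bar> \<le> 1" and abar: "0 < abar" "abar < 1"
  shows "(\<integral>\<^sup>+x. F (case x of (m, s0, st, st1) \<Rightarrow> (st, st1, m)) \<partial>model_law \<rho> abar \<beta>)
    = (\<integral>\<^sup>+x. ennreal (joint_dens \<rho> abar \<beta> x) * F x \<partial>lborel)"
proof -
  define c where "c = sqrt (1 - \<rho>\<^sup>2)"
  define N where "N \<mu> v x = ennreal (gauss_dens \<mu> v x)" for \<mu> v x
  define K where "K z1 z2 st = N (sqrt abar * (\<rho> * z1 + c * z2)) (1 - abar) st" for z1 z2 st
  define L where "L st st1 = N (sqrt (1 - \<beta>) * st) \<beta> st1" for st st1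
  define Q where "Q z1 z2 st st1 = N 0 1 z1 * N 0 1 z2 * K z1 z2 st * L st st1 * F (st, st1, z1)"
    for z1 z2 st st1
  have [measurable]: "(\<lambda>p. N (f p) v (g p)) \<in> borel_measurable M"
    if [measurable]: "f \<in> borel_measurable M" "g \<in> borel_measurable M" for M f v g
    unfolding N_def by measurable
  have [measurable]: "F \<in> borel_measurable (borel \<Otimes>\<^sub>M (borel \<Otimes>\<^sub>M borel))"
    unfolding borel_prod by (rule F)
  have "(\<integral>\<^sup>+x. F (case x of (m, s0, st, st1) \<Rightarrow> (st, st1, m)) \<partial>model_law \<rho> abar \<beta>)
      = (\<integral>\<^sup>+z1. \<integral>\<^sup>+z2. N 0 1 z1 * (N 0 1 z2 *
          (\<integral>\<^sup>+st. K z1 z2 st * (\<integral>\<^sup>+st1. L st st1 * F (st, st1, z1) \<partial>lborel) \<partial>lborel)) \<partial>lborel \<partial>lborel)"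
    unfolding N_def K_def L_def c_def
    by (subst nn_integral_model_law) (simp_all add: split_beta', unfold borel_prod[symmetric], measurable)
  also have "\<dots> = (\<integral>\<^sup>+z1. \<integral>\<^sup>+z2. \<integral>\<^sup>+st. \<integral>\<^sup>+st1. Q z1 z2 st st1 \<partial>lborel \<partial>lborel \<partial>lborel \<partial>lborel)"
  proof (intro nn_integral_cong)
    fix z1 z2
    define I where "I st = (\<integral>\<^sup>+st1. L st st1 * F (st, st1, z1) \<partial>lborel)" for st
    have [measurable]: "I \<in> borel_measurable borel"
      unfolding I_def L_def by measurable
    have "(\<integral>\<^sup>+st. \<integral>\<^sup>+st1. Q z1 z2 st st1 \<partial>lborel \<partial>lborel) = (\<integral>\<^sup>+st. N 0 1 z1 * N 0 1 z2 * K z1 z2 st * I st \<partial>lborel)"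
    proof (intro nn_integral_cong)
      fix st
      show "(\<integral>\<^sup>+st1. Q z1 z2 st st1 \<partial>lborel) = N 0 1 z1 * N 0 1 z2 * K z1 z2 st * I st"
        unfolding I_def Q_def mult.assoc[of "N 0 1 z1 * N 0 1 z2 * K z1 z2 st"]
        by (rule nn_integral_cmult) (unfold L_def, measurable)
    qed
    also have "\<dots> = N 0 1 z1 * N 0 1 z2 * (\<integral>\<^sup>+st. K z1 z2 st * I st \<partial>lborel)"
      unfolding mult.assoc[of "N 0 1 z1 * N 0 1 z2"] by (rule nn_integral_cmult) (unfold K_def, measurable)
    finally show "N 0 1 z1 * (N 0 1 z2 * (\<integral>\<^sup>+st. K z1 z2 st * (\<integral>\<^sup>+st1. L st st1 * F (st, st1, z1) \<partial>lborel) \<partial>lborel))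
        = (\<integral>\<^sup>+st. \<integral>\<^sup>+st1. Q z1 z2 st st1 \<partial>lborel \<partial>lborel)"
      by (simp add: I_def mult.assoc)
  qed
  also have "\<dots> = (\<integral>\<^sup>+z1. \<integral>\<^sup>+st. \<integral>\<^sup>+st1. \<integral>\<^sup>+z2. Q z1 z2 st st1 \<partial>lborel \<partial>lborel \<partial>lborel \<partial>lborel)"
  proof (rule nn_integral_cong)
    fix z1
    have [measurable]: "(\<lambda>p. Q z1 (fst p) (fst (snd p)) (snd (snd p))) \<in> borel_measurable borel"
      unfolding Q_def K_def L_def borel_prod[symmetric] by measurable
    have "(\<integral>\<^sup>+z2. \<integral>\<^sup>+st. \<integral>\<^sup>+st1. Q z1 z2 st st1 \<partial>lborel \<partial>lborel \<partial>lborel)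
        = (\<integral>\<^sup>+st. \<integral>\<^sup>+z2. \<integral>\<^sup>+st1. Q z1 z2 st st1 \<partial>lborel \<partial>lborel \<partial>lborel)"
      by (rule nn_integral_lborel_swap, unfold borel_prod[symmetric])
        (rule borel_measurable_nn_integral_lborel, unfold Q_def K_def L_def, measurable)
    also have "\<dots> = (\<integral>\<^sup>+st. \<integral>\<^sup>+st1. \<integral>\<^sup>+z2. Q z1 z2 st st1 \<partial>lborel \<partial>lborel \<partial>lborel)"
      by (intro nn_integral_cong nn_integral_lborel_swap) (unfold Q_def K_def L_def borel_prod[symmetric], measurable)
    finally show "(\<integral>\<^sup>+z2. \<integral>\<^sup>+st. \<integral>\<^sup>+st1. Q z1 z2 st st1 \<partial>lborel \<partial>lborel \<partial>lborel)
        = (\<integral>\<^sup>+st. \<integral>\<^sup>+st1. \<integral>\<^sup>+z2. Q z1 z2 st st1 \<partial>lborel \<partial>lborel \<partial>lborel)" .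
  qed
  also have "\<dots> = (\<integral>\<^sup>+m. \<integral>\<^sup>+s. \<integral>\<^sup>+y. ennreal (joint_dens \<rho> abar \<beta> (s, y, m)) * F (s, y, m) \<partial>lborel \<partial>lborel \<partial>lborel)"
  proof (intro nn_integral_cong)
    fix z1 st st1
    have "1 - abar + (sqrt abar * c)\<^sup>2 * 1 = 1 - abar * \<rho>\<^sup>2"
      using abar \<rho> by (simp add: c_def power_mult_distrib abs_square_le_1 algebra_simps)
    from nn_integral_gauss_dens_convolution[of 1 "1 - abar" 0 "sqrt abar * \<rho> * z1" "sqrt abar * c" st, unfolded this]
    have marginal: "(\<integral>\<^sup>+z2. N 0 1 z2 * K z1 z2 st \<partial>lborel) = N (sqrt abar * \<rho> * z1) (1 - abar * \<rho>\<^sup>2) st"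
      using abar by (simp add: N_def K_def ennreal_mult' algebra_simps)
    have "(\<integral>\<^sup>+z2. Q z1 z2 st st1 \<partial>lborel) = N 0 1 z1 * L st st1 * F (st, st1, z1) * (\<integral>\<^sup>+z2. N 0 1 z2 * K z1 z2 st \<partial>lborel)"
      by (subst nn_integral_cmult[symmetric]) (simp_all add: Q_def K_def ac_simps, measurable)
    then show "(\<integral>\<^sup>+z2. Q z1 z2 st st1 \<partial>lborel) = ennreal (joint_dens \<rho> abar \<beta> (st, st1, z1)) * F (st, st1, z1)"
      unfolding marginal by (simp add: joint_dens_def N_def L_def ennreal_mult' ac_simps)
  qed
  also have "\<dots> = (\<integral>\<^sup>+x. ennreal (joint_dens \<rho> abar \<beta> x) * F x \<partial>lborel)"
    by (rule nn_integral_lborel_triple_312[symmetric]) (use F in measurable)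
  finally show ?thesis .
qed

lemma distr_model_law_triple:
  assumes "\<bar>\<rho>\<bar> \<le> 1" "0 < abar" "abar < 1"
  shows "distr (model_law \<rho> abar \<beta>) lborel (\<lambda>(m, s0, st, st1). (st, st1, m))
    = density lborel (\<lambda>x. ennreal (joint_dens \<rho> abar \<beta> x))"
proof (rule measure_eqI)
  fix A :: "(real \<times> real \<times> real) set"
  assume "A \<in> sets (distr (model_law \<rho> abar \<beta>) lborel (\<lambda>(m, s0, st, st1). (st, st1, m)))"
  then have A [measurable]: "A \<in> sets borel" by simp
  have proj: "(\<lambda>(m::real, s0::real, st::real, st1::real). (st, st1, m)) \<in> measurable (model_law \<rho> abar \<beta>) lborel"
    unfolding split_beta' by (simp add: measurable_cong_sets[OF sets_model_law refl])
      (unfold borel_prod[symmetric], measurable)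
  have "emeasure (distr (model_law \<rho> abar \<beta>) lborel (\<lambda>(m, s0, st, st1). (st, st1, m))) A
      = (\<integral>\<^sup>+x. indicator A x \<partial>distr (model_law \<rho> abar \<beta>) lborel (\<lambda>(m, s0, st, st1). (st, st1, m)))"
    by simp
  also have "\<dots> = (\<integral>\<^sup>+x. indicator A (case x of (m, s0, st, st1) \<Rightarrow> (st, st1, m)) \<partial>model_law \<rho> abar \<beta>)"
    by (rule nn_integral_distr[OF proj]) simp
  also have "\<dots> = (\<integral>\<^sup>+x. ennreal (joint_dens \<rho> abar \<beta> x) * indicator A x \<partial>lborel)"
    by (rule nn_integral_model_law_triple) (use assms in simp_all)
  finally show "emeasure (distr (model_law \<rho> abar \<beta>) lborel (\<lambda>(m, s0, st, st1). (st, st1, m))) A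
      = emeasure (density lborel (\<lambda>x. ennreal (joint_dens \<rho> abar \<beta> x))) A"
    by (simp add: emeasure_density)
qed simp

section \<open>The two posteriors of \<open>X\<^sub>S\<^sup>t\<close>\<close>

locale forward_step =
  fixes \<rho> abar \<beta> :: real
  assumes rho: "\<bar>\<rho>\<bar> \<le> 1" and beta_pos: "0 < \<beta>" and beta_less_1: "\<beta> < 1"
    and abar_pos: "0 < abar" and abar_less_1: "abar < 1"
begin

text \<open>Given \<open>X\<^sub>M\<^sup>0 = m\<close>, \<open>X\<^sub>S\<^sup>t \<sim> N(a \<rho> m, 1 - d)\<close> and \<open>X\<^sub>S\<^sup>t\<^sup>+\<^sup>1 \<sim> N(b a \<rho> m, var_y)\<close>;
  \<open>post_mean\<close> and \<open>post_var\<close> describe \<open>q(X\<^sub>S\<^sup>t | X\<^sub>S\<^sup>t\<^sup>+\<^sup>1 = y, X\<^sub>M\<^sup>0 = m)\<close>.\<close>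
definition "a = sqrt abar"
definition "b = sqrt (1 - \<beta>)"
definition "d = abar * \<rho>\<^sup>2"
definition "var_y = \<beta> + b\<^sup>2 * (1 - d)"
definition "post_var = (1 - d) * \<beta> / var_y"
definition "post_mean y m = a * \<rho> * m + b * (1 - d) * (y - b * (a * \<rho> * m)) / var_y"

lemma d_nonneg: "0 \<le> d"
  unfolding d_def using abar_pos by simp

lemma d_less_1: "d < 1"
proof -
  have "abar * \<rho>\<^sup>2 \<le> abar"
    using mult_left_mono[of "\<rho>\<^sup>2" 1 abar] rho abar_pos by (simp add: abs_square_le_1)
  then show ?thesis unfolding d_def using abar_less_1 by linarith
qed

lemma b_sq: "b\<^sup>2 = 1 - \<beta>"
  unfolding b_def using beta_less_1 by simp

lemma a_rho_sq: "(a * \<rho>)\<^sup>2 = d"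
  unfolding a_def d_def using abar_pos by (simp add: power_mult_distrib)

lemma var_y_eq: "var_y = 1 - d + \<beta> * d"
  unfolding var_y_def b_sq by (simp add: algebra_simps)

lemma var_y_pos: "0 < var_y"
  unfolding var_y_def b_sq using beta_pos beta_less_1 d_less_1 by (simp add: add_pos_nonneg)

lemma post_var_pos: "0 < post_var"
  unfolding post_var_def using var_y_pos d_less_1 beta_pos by simp

lemma joint_dens_eq_via_posterior:
  "joint_dens \<rho> abar \<beta> (s, y, m) = gauss_dens 0 1 m * gauss_dens (b * (a * \<rho> * m)) var_y y * gauss_dens (post_mean y m) post_var s"
proof -
  have "gauss_dens (a * \<rho> * m) (1 - d) s * gauss_dens (0 + b * s) \<beta> y =
    gauss_dens (0 + b * (a * \<rho> * m)) (\<beta> + b\<^sup>2 * (1 - d)) y *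
    gauss_dens (a * \<rho> * m + b * (1 - d) * (y - 0 - b * (a * \<rho> * m)) / (\<beta> + b\<^sup>2 * (1 - d)))
      ((1 - d) * \<beta> / (\<beta> + b\<^sup>2 * (1 - d))) s"
    by (rule gauss_dens_bayes) (use d_less_1 beta_pos in auto)
  then show ?thesis
    unfolding joint_dens_def post_mean_def post_var_def var_y_def[symmetric]
    by (simp add: a_def b_def d_def mult.assoc)
qed

lemma joint_dens_eq_via_marginal_posterior:
  "joint_dens \<rho> abar \<beta> (s, y, m) = gauss_dens 0 1 y * gauss_dens (b * y) \<beta> s * gauss_dens (a * \<rho> * s) (1 - d) m"
proof -
  have "gauss_dens 0 1 m * gauss_dens (0 + (a * \<rho>) * m) (1 - d) s =
    gauss_dens (0 + (a * \<rho>) * 0) ((1 - d) + (a * \<rho>)\<^sup>2 * 1) s *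
    gauss_dens (0 + (a * \<rho>) * 1 * (s - 0 - (a * \<rho>) * 0) / ((1 - d) + (a * \<rho>)\<^sup>2 * 1))
      (1 * (1 - d) / ((1 - d) + (a * \<rho>)\<^sup>2 * 1)) m"
    by (rule gauss_dens_bayes) (use d_less_1 in auto)
  then have m_s: "gauss_dens 0 1 m * gauss_dens (a * \<rho> * m) (1 - d) s = gauss_dens 0 1 s * gauss_dens (a * \<rho> * s) (1 - d) m"
    unfolding a_rho_sq by simp
  have "gauss_dens 0 1 s * gauss_dens (0 + b * s) \<beta> y =
    gauss_dens (0 + b * 0) (\<beta> + b\<^sup>2 * 1) y *
    gauss_dens (0 + b * 1 * (y - 0 - b * 0) / (\<beta> + b\<^sup>2 * 1)) (1 * \<beta> / (\<beta> + b\<^sup>2 * 1)) s"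
    by (rule gauss_dens_bayes) (use beta_pos in auto)
  then have s_y: "gauss_dens 0 1 s * gauss_dens (b * s) \<beta> y = gauss_dens 0 1 y * gauss_dens (b * y) \<beta> s"
    unfolding b_sq by simp
  have "joint_dens \<rho> abar \<beta> (s, y, m) = (gauss_dens 0 1 m * gauss_dens (a * \<rho> * m) (1 - d) s) * gauss_dens (b * s) \<beta> y"
    unfolding joint_dens_def by (simp add: a_def b_def d_def)
  also have "\<dots> = (gauss_dens 0 1 s * gauss_dens (b * s) \<beta> y) * gauss_dens (a * \<rho> * s) (1 - d) m"
    unfolding m_s by (simp add: ac_simps)
  finally show ?thesis
    unfolding s_y .
qed

lemma integral_joint_dens_fst:
  "(\<integral>s. joint_dens \<rho> abar \<beta> (s, y, m) \<partial>lborel) = gauss_dens 0 1 m * gauss_dens (b * (a * \<rho> * m)) var_y y"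
  unfolding joint_dens_eq_via_posterior using post_var_pos by (simp add: integral_gauss_dens)

lemma integral_joint_dens_snd_snd:
  "(\<integral>m. joint_dens \<rho> abar \<beta> (s, y, m) \<partial>lborel) = gauss_dens 0 1 y * gauss_dens (b * y) \<beta> s"
  unfolding joint_dens_eq_via_marginal_posterior using d_less_1 by (simp add: integral_gauss_dens)

lemma AE_cond_dens_full_eq_posterior:
  fixes f :: "real \<times> real \<times> real \<Rightarrow> ennreal"
  assumes f: "f \<in> borel_measurable borel"
    and f_eq: "AE s in lborel. f (s, y, m) = ennreal (joint_dens \<rho> abar \<beta> (s, y, m))"
  shows "AE s in lborel. cond_dens_full f s y m = gauss_dens (post_mean y m) post_var s"
proof -
  have [measurable]: "f \<in> borel_measurable (borel \<Otimes>\<^sub>M (borel \<Otimes>\<^sub>M borel))"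
    unfolding borel_prod by (rule f)
  define Z where "Z = gauss_dens 0 1 m * gauss_dens (b * (a * \<rho> * m)) var_y y"
  have Z_pos: "0 < Z"
    unfolding Z_def using var_y_pos by (simp add: gauss_dens_pos)
  have normaliser: "(\<integral>s. enn2real (f (s, y, m)) \<partial>lborel) = Z"
  proof -
    have "(\<integral>s. enn2real (f (s, y, m)) \<partial>lborel) = (\<integral>s. joint_dens \<rho> abar \<beta> (s, y, m) \<partial>lborel)"
      by (rule integral_cong_AE) (use f_eq in \<open>auto elim!: eventually_mono\<close>)
    then show ?thesis
      unfolding integral_joint_dens_fst Z_def .
  qed
  show ?thesis
    using f_eq by (rule eventually_mono)
      (use Z_pos in \<open>simp add: cond_dens_full_def normaliser joint_dens_eq_via_posterior Z_def[symmetric]\<close>)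
qed

lemma AE_cond_dens_marg_eq_posterior:
  fixes f :: "real \<times> real \<times> real \<Rightarrow> ennreal"
  assumes f: "f \<in> borel_measurable borel"
    and f_eq: "AE s in lborel. AE m in lborel. f (s, y, m) = ennreal (joint_dens \<rho> abar \<beta> (s, y, m))"
  shows "AE s in lborel. cond_dens_marg f s y = gauss_dens (b * y) \<beta> s"
proof -
  have [measurable]: "f \<in> borel_measurable (borel \<Otimes>\<^sub>M (borel \<Otimes>\<^sub>M borel))"
    unfolding borel_prod by (rule f)
  have [measurable]: "(\<lambda>s. \<integral>m. enn2real (f (s, y, m)) \<partial>lborel) \<in> borel_measurable borel"
    by (rule borel_measurable_integral_lborel) measurable
  have marg: "AE s in lborel. (\<integral>m. enn2real (f (s, y, m)) \<partial>lborel) = gauss_dens 0 1 y * gauss_dens (b * y) \<beta> s"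
    using f_eq
  proof eventually_elim
    case (elim s)
    then have "(\<integral>m. enn2real (f (s, y, m)) \<partial>lborel) = (\<integral>m. joint_dens \<rho> abar \<beta> (s, y, m) \<partial>lborel)"
      by (intro integral_cong_AE) (auto elim!: eventually_mono)
    then show ?case
      unfolding integral_joint_dens_snd_snd .
  qed
  have "(\<integral>s. (\<integral>m. enn2real (f (s, y, m)) \<partial>lborel) \<partial>lborel) = (\<integral>s. gauss_dens 0 1 y * gauss_dens (b * y) \<beta> s \<partial>lborel)"
    by (rule integral_cong_AE) (use marg in auto)
  also have "\<dots> = gauss_dens 0 1 y"
    using beta_pos by (simp add: integral_gauss_dens)
  finally have normaliser: "(\<integral>s. (\<integral>m. enn2real (f (s, y, m)) \<partial>lborel) \<partial>lborel) = gauss_dens 0 1 y" .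
  show ?thesis
    using marg gauss_dens_pos[of 1 0 y] by (auto simp: cond_dens_marg_def normaliser elim: eventually_mono)
qed

definition "kl_post y m = (ln (\<beta> / post_var) + (post_var + (post_mean y m - b * y)\<^sup>2) / \<beta> - 1) / 2"

lemma kl_cond_dens_eq_kl_post:
  fixes f :: "real \<times> real \<times> real \<Rightarrow> ennreal"
  assumes f: "f \<in> borel_measurable borel"
    and "AE s in lborel. f (s, y, m) = ennreal (joint_dens \<rho> abar \<beta> (s, y, m))"
    and "AE s in lborel. AE m' in lborel. f (s, y, m') = ennreal (joint_dens \<rho> abar \<beta> (s, y, m'))"
  shows "kl_div (\<lambda>st. cond_dens_full f st y m) (\<lambda>st. cond_dens_marg f st y) = kl_post y m"
proof -
  have [measurable]: "f \<in> borel_measurable (borel \<Otimes>\<^sub>M (borel \<Otimes>\<^sub>M borel))"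
    unfolding borel_prod by (rule f)
  have [measurable]: "(\<lambda>s. \<integral>m'. enn2real (f (s, y, m')) \<partial>lborel) \<in> borel_measurable borel"
    by (rule borel_measurable_integral_lborel) measurable
  have "AE s in lborel. cond_dens_full f s y m * ln (cond_dens_full f s y m / cond_dens_marg f s y) =
      gauss_dens (post_mean y m) post_var s * ln (gauss_dens (post_mean y m) post_var s / gauss_dens (b * y) \<beta> s)"
    using AE_cond_dens_full_eq_posterior[OF assms(1,2)] AE_cond_dens_marg_eq_posterior[OF assms(1,3)]
    by eventually_elim simp
  then have "kl_div (\<lambda>st. cond_dens_full f st y m) (\<lambda>st. cond_dens_marg f st y) =
      (\<integral>s. gauss_dens (post_mean y m) post_var s * ln (gauss_dens (post_mean y m) post_var s / gauss_dens (b * y) \<beta> s) \<partial>lborel)"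
    unfolding kl_div_def
    by (intro integral_cong_AE) (simp_all add: cond_dens_full_def cond_dens_marg_def)
  also have "\<dots> = kl_post y m"
    unfolding kl_post_def by (rule kl_gauss_dens[OF post_var_pos beta_pos])
  finally show ?thesis .
qed

end

section \<open>Bounds on the posterior KL divergence\<close>

lemma ln_add_inverse_mono:
  fixes r0 r :: real
  assumes "1 \<le> r0" "r0 \<le> r"
  shows "ln r0 + 1 / r0 \<le> ln r + 1 / r"
proof -
  have "ln (r0 / r) \<le> r0 / r - 1"
    by (rule ln_le_minus_one) (use assms in simp)
  then have "ln r0 - ln r \<le> r0 / r - 1"
    using assms by (simp add: ln_div)
  moreover have "r0 / r - 1 \<le> 1 / r - 1 / r0"
  proof -
    have "(1 / r - 1 / r0) - (r0 / r - 1) = (r - r0) * (r0 - 1) / (r * r0)"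
      using assms by (simp add: field_simps)
    also have "\<dots> \<ge> 0"
      using assms by simp
    finally show ?thesis by simp
  qed
  ultimately show ?thesis by linarith
qed

context forward_step
begin

definition "kl_const = (ln (\<beta> / post_var) + post_var / \<beta> - 1) / 2"
definition "coef_y = b * (1 - d) / var_y - b"
definition "coef_m = a * \<rho> - b * (1 - d) * (b * (a * \<rho>)) / var_y"

lemma kl_post_eq: "kl_post y m = kl_const + (coef_y * y + coef_m * m)\<^sup>2 / (2 * \<beta>)"
proof -
  have "post_mean y m - b * y = coef_y * y + coef_m * m"
    unfolding post_mean_def coef_y_def coef_m_def using var_y_pos by (simp add: field_simps)
  then show ?thesis
    unfolding kl_post_def kl_const_def using beta_pos by (simp add: field_simps)
qed

text \<open>With \<open>r = \<beta> / post_var = 1 + \<beta> d / (1 - d)\<close> and \<open>r\<^sub>0 = 1 / (1 - \<beta> d)\<close> one has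
  \<open>r\<^sub>0 \<le> r\<close>, and the bound is the monotonicity of \<open>ln r + 1/r\<close> on \<open>[1, \<infinity>)\<close>.\<close>
lemma kl_const_lower_bound: "kl_const \<ge> - (1/2) * (ln (1 - \<beta> * abar * \<rho>\<^sup>2) + \<beta> * abar * \<rho>\<^sup>2)"
proof -
  define x where "x = \<beta> * d"
  have "0 \<le> x" "x \<le> d"
    unfolding x_def using d_nonneg beta_pos beta_less_1 by (auto intro: mult_left_le_one_le)
  then have x: "0 \<le> x" "x \<le> d" "x < 1"
    using d_less_1 by linarith+
  have "1 \<le> 1 / (1 - x)"
    using x by simp
  moreover have "1 / (1 - x) \<le> \<beta> / post_var"
  proof -
    have "1 - d \<le> (1 - d + x) * (1 - x)"
      using x by (simp add: algebra_simps mult_left_mono)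
    then have "1 / (1 - x) \<le> (1 - d + x) / (1 - d)"
      using x d_less_1 by (simp add: divide_simps)
    also have "\<dots> = \<beta> / post_var"
      unfolding post_var_def var_y_eq x_def using beta_pos d_less_1 by (simp add: field_simps)
    finally show ?thesis .
  qed
  ultimately have "ln (1 / (1 - x)) + (1 - x) \<le> ln (\<beta> / post_var) + post_var / \<beta>"
    using ln_add_inverse_mono[of "1 / (1 - x)" "\<beta> / post_var"] by simp
  then show ?thesis
    unfolding kl_const_def using x by (simp add: x_def d_def ln_div algebra_simps)
qed

lemma kl_post_lower_bound: "kl_post y m \<ge> - (1/2) * (ln (1 - \<beta> * abar * \<rho>\<^sup>2) + \<beta> * abar * \<rho>\<^sup>2)"
  using kl_const_lower_bound beta_pos unfolding kl_post_eq by (smt (verit) divide_nonneg_pos zero_le_power2)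

lemma abs_kl_post_le: "\<bar>kl_post y m\<bar> \<le> \<bar>kl_const\<bar> + (coef_y\<^sup>2 / \<beta>) * y\<^sup>2 + (coef_m\<^sup>2 / \<beta>) * m\<^sup>2"
proof -
  have "(coef_y * y + coef_m * m)\<^sup>2 \<le> 2 * (coef_y\<^sup>2 * y\<^sup>2) + 2 * (coef_m\<^sup>2 * m\<^sup>2)"
    using zero_le_power2[of "coef_y * y - coef_m * m"] by (simp add: power2_eq_square algebra_simps)
  then have "(coef_y * y + coef_m * m)\<^sup>2 / (2 * \<beta>) \<le> (coef_y\<^sup>2 / \<beta>) * y\<^sup>2 + (coef_m\<^sup>2 / \<beta>) * m\<^sup>2"
    using beta_pos by (simp add: field_simps)
  moreover have "0 \<le> (coef_y * y + coef_m * m)\<^sup>2 / (2 * \<beta>)"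
    using beta_pos by simp
  ultimately show ?thesis
    unfolding kl_post_eq by linarith
qed

end

context forward_step
begin

lemma nn_integral_joint_dens_snd_snd:
  assumes [measurable]: "g \<in> borel_measurable borel" and g: "\<And>m. 0 \<le> g m"
  shows "(\<integral>\<^sup>+x. ennreal (joint_dens \<rho> abar \<beta> x * g (snd (snd x))) \<partial>lborel)
    = (\<integral>\<^sup>+m. ennreal (gauss_dens 0 1 m * g m) \<partial>lborel)"
proof -
  have "(\<lambda>x. ennreal (joint_dens \<rho> abar \<beta> x * g (snd (snd x)))) \<in> borel_measurable borel"
    using borel_measurable_joint_dens[of \<rho> abar \<beta>] unfolding borel_prod[symmetric] by measurable
  from nn_integral_lborel_triple_312[OF this]
  have "(\<integral>\<^sup>+x. ennreal (joint_dens \<rho> abar \<beta> x * g (snd (snd x))) \<partial>lborel)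
      = (\<integral>\<^sup>+m. \<integral>\<^sup>+s. \<integral>\<^sup>+y. ennreal (joint_dens \<rho> abar \<beta> (s, y, m) * g m) \<partial>lborel \<partial>lborel \<partial>lborel)"
    by simp
  also have "\<dots> = (\<integral>\<^sup>+m. \<integral>\<^sup>+s. ennreal (gauss_dens 0 1 m * g m * gauss_dens (a * \<rho> * m) (1 - d) s) \<partial>lborel \<partial>lborel)"
  proof (intro nn_integral_cong)
    fix m s
    have factor: "joint_dens \<rho> abar \<beta> (s, y, m) * g m = gauss_dens 0 1 m * g m * gauss_dens (a * \<rho> * m) (1 - d) s * gauss_dens (b * s) \<beta> y" for y
      by (simp add: joint_dens_def a_def b_def d_def ac_simps)
    show "(\<integral>\<^sup>+y. ennreal (joint_dens \<rho> abar \<beta> (s, y, m) * g m) \<partial>lborel)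
        = ennreal (gauss_dens 0 1 m * g m * gauss_dens (a * \<rho> * m) (1 - d) s)"
      unfolding factor using beta_pos g by (simp add: nn_integral_gauss_dens_cmult)
  qed
  also have "\<dots> = (\<integral>\<^sup>+m. ennreal (gauss_dens 0 1 m * g m) \<partial>lborel)"
    using d_less_1 g by (simp add: nn_integral_gauss_dens_cmult)
  finally show ?thesis .
qed

lemma nn_integral_joint_dens_fst_snd:
  assumes [measurable]: "g \<in> borel_measurable borel" and g: "\<And>y. 0 \<le> g y"
  shows "(\<integral>\<^sup>+x. ennreal (joint_dens \<rho> abar \<beta> x * g (fst (snd x))) \<partial>lborel)
    = (\<integral>\<^sup>+y. ennreal (gauss_dens 0 1 y * g y) \<partial>lborel)"
proof -
  have "(\<lambda>x. ennreal (joint_dens \<rho> abar \<beta> x * g (fst (snd x)))) \<in> borel_measurable borel"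
    using borel_measurable_joint_dens[of \<rho> abar \<beta>] unfolding borel_prod[symmetric] by measurable
  from nn_integral_lborel_triple_213[OF this]
  have "(\<integral>\<^sup>+x. ennreal (joint_dens \<rho> abar \<beta> x * g (fst (snd x))) \<partial>lborel)
      = (\<integral>\<^sup>+y. \<integral>\<^sup>+s. \<integral>\<^sup>+m. ennreal (joint_dens \<rho> abar \<beta> (s, y, m) * g y) \<partial>lborel \<partial>lborel \<partial>lborel)"
    by simp
  also have "\<dots> = (\<integral>\<^sup>+y. \<integral>\<^sup>+s. ennreal (gauss_dens 0 1 y * g y * gauss_dens (b * y) \<beta> s) \<partial>lborel \<partial>lborel)"
  proof (intro nn_integral_cong)
    fix y s
    have factor: "joint_dens \<rho> abar \<beta> (s, y, m) * g y = gauss_dens 0 1 y * g y * gauss_dens (b * y) \<beta> s * gauss_dens (a * \<rho> * s) (1 - d) m" for m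
      by (simp add: joint_dens_eq_via_marginal_posterior ac_simps)
    show "(\<integral>\<^sup>+m. ennreal (joint_dens \<rho> abar \<beta> (s, y, m) * g y) \<partial>lborel)
        = ennreal (gauss_dens 0 1 y * g y * gauss_dens (b * y) \<beta> s)"
      unfolding factor using d_less_1 g by (simp add: nn_integral_gauss_dens_cmult)
  qed
  also have "\<dots> = (\<integral>\<^sup>+y. ennreal (gauss_dens 0 1 y * g y) \<partial>lborel)"
    using beta_pos g by (simp add: nn_integral_gauss_dens_cmult)
  finally show ?thesis .
qed

end

section \<open>Transfer to the probability space\<close>

lemma AE_comp_of_distr_density:
  fixes T :: "'a \<Rightarrow> 'b :: euclidean_space"
  assumes T: "T \<in> measurable \<Omega> lborel" and law: "distr \<Omega> lborel T = density lborel p"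
    and [measurable]: "p \<in> borel_measurable borel" "Measurable.pred borel P" and P: "AE x in lborel. P x"
  shows "AE \<omega> in \<Omega>. P (T \<omega>)"
proof -
  have "AE x in distr \<Omega> lborel T. P x"
    unfolding law using P by (auto simp: AE_density elim: eventually_mono)
  then show ?thesis
    by (subst (asm) AE_distr_iff[OF T]) (simp_all add: pred_def)
qed

lemma integrable_comp_of_distr_density:
  fixes T :: "'a \<Rightarrow> 'b :: euclidean_space"
  assumes T: "T \<in> measurable \<Omega> lborel" and law: "distr \<Omega> lborel T = density lborel (\<lambda>x. ennreal (p x))"
    and [measurable]: "p \<in> borel_measurable borel" "h \<in> borel_measurable borel"
    and h: "\<And>x. 0 \<le> h x" and finite: "(\<integral>\<^sup>+x. ennreal (p x * h x) \<partial>lborel) < \<infinity>"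
  shows "integrable \<Omega> (\<lambda>\<omega>. h (T \<omega>))"
proof (rule integrableI_bounded)
  show "(\<lambda>\<omega>. h (T \<omega>)) \<in> borel_measurable \<Omega>"
    using T by simp
  have "(\<integral>\<^sup>+\<omega>. ennreal (norm (h (T \<omega>))) \<partial>\<Omega>) = (\<integral>\<^sup>+x. ennreal (h x) \<partial>distr \<Omega> lborel T)"
    using h by (simp add: nn_integral_distr[OF T])
  also have "\<dots> = (\<integral>\<^sup>+x. ennreal (p x * h x) \<partial>lborel)"
    unfolding law by (subst nn_integral_density) (simp_all add: ennreal_mult'' h)
  finally show "(\<integral>\<^sup>+\<omega>. ennreal (norm (h (T \<omega>))) \<partial>\<Omega>) < \<infinity>"
    using finite by simp
qed

lemma borel_measurable_kl_cond_dens: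
  fixes f :: "real \<times> real \<times> real \<Rightarrow> ennreal"
  assumes f: "f \<in> borel_measurable borel"
  shows "(\<lambda>p. kl_div (\<lambda>st. cond_dens_full f st (fst p) (snd p)) (\<lambda>st. cond_dens_marg f st (fst p)))
    \<in> borel_measurable borel"
proof -
  have [measurable]: "f \<in> borel_measurable (borel \<Otimes>\<^sub>M (borel \<Otimes>\<^sub>M borel))"
    unfolding borel_prod by (rule f)
  define Z where "Z p = (\<integral>s. enn2real (f (s, fst p, snd p)) \<partial>lborel)" for p :: "real \<times> real"
  define M where "M p = (\<integral>m. enn2real (f (fst p, snd p, m)) \<partial>lborel)" for p :: "real \<times> real"
  define W where "W y = (\<integral>s. M (s, y) \<partial>lborel)" for y
  have [measurable]: "Z \<in> borel_measurable (borel \<Otimes>\<^sub>M borel)" "M \<in> borel_measurable (borel \<Otimes>\<^sub>M borel)"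
    unfolding Z_def[abs_def] M_def[abs_def] by (rule borel_measurable_integral_lborel, measurable)+
  have [measurable]: "W \<in> borel_measurable borel"
    unfolding W_def[abs_def] by (rule borel_measurable_integral_lborel) measurable
  have "(\<lambda>p. \<integral>s. enn2real (f (s, fst p, snd p)) / Z p * ln (enn2real (f (s, fst p, snd p)) / Z p / (M (s, fst p) / W (fst p))) \<partial>lborel)
      \<in> borel_measurable (borel \<Otimes>\<^sub>M borel)"
    by (rule borel_measurable_integral_lborel) measurable
  then show ?thesis
    unfolding kl_div_def cond_dens_full_def cond_dens_marg_def Z_def M_def W_def borel_prod by simp
qed

context forward_step
begin

lemma borel_measurable_kl_post [measurable]:
  assumes [measurable]: "f \<in> borel_measurable M" "g \<in> borel_measurable M"
  shows "(\<lambda>x. kl_post (f x) (g x)) \<in> borel_measurable M"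
  unfolding kl_post_eq by measurable

lemma AE_kl_cond_dens_eq_kl_post:
  fixes f :: "real \<times> real \<times> real \<Rightarrow> ennreal"
  assumes f: "f \<in> borel_measurable borel" and f_eq: "AE x in lborel. f x = ennreal (joint_dens \<rho> abar \<beta> x)"
  shows "AE (x :: real \<times> real \<times> real) in lborel.
    kl_div (\<lambda>st. cond_dens_full f st (fst (snd x)) (snd (snd x))) (\<lambda>st. cond_dens_marg f st (fst (snd x)))
      = kl_post (fst (snd x)) (snd (snd x))"
proof -
  have [measurable]: "f \<in> borel_measurable (borel \<Otimes>\<^sub>M (borel \<Otimes>\<^sub>M borel))"
    "joint_dens \<rho> abar \<beta> \<in> borel_measurable (borel \<Otimes>\<^sub>M (borel \<Otimes>\<^sub>M borel))"
    unfolding borel_prod by (simp_all add: f)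
  have eq_s: "AE y in lborel. AE m in lborel. AE s in lborel. f (s, y, m) = ennreal (joint_dens \<rho> abar \<beta> (s, y, m))"
    by (rule AE_lborel_triple_D[OF _ f_eq]) (unfold borel_prod[symmetric], measurable)
  moreover have "AE y in lborel. AE s in lborel. AE m in lborel. f (s, y, m) = ennreal (joint_dens \<rho> abar \<beta> (s, y, m))"
    using eq_s by (rule eventually_mono) (subst AE_lborel_swap, unfold borel_prod[symmetric], measurable)
  ultimately have ae: "AE y in lborel. AE m in lborel.
      kl_div (\<lambda>st. cond_dens_full f st y m) (\<lambda>st. cond_dens_marg f st y) = kl_post y m"
  proof eventually_elim
    case (elim y)
    show ?case
      using elim(1) by (rule eventually_mono) (rule kl_cond_dens_eq_kl_post[OF f _ elim(2)])
  qed
  have pred: "Measurable.pred borel (\<lambda>p. kl_div (\<lambda>st. cond_dens_full f st (fst p) (snd p))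
      (\<lambda>st. cond_dens_marg f st (fst p)) = kl_post (fst p) (snd p))"
    using borel_measurable_kl_cond_dens[OF f] unfolding borel_prod[symmetric] by measurable
  show ?thesis
    using AE_lborel_triple_snd_I[OF pred] ae by simp
qed

lemma integrable_kl_post:
  fixes T :: "'a \<Rightarrow> real \<times> real \<times> real"
  assumes "prob_space \<Omega>" and T: "T \<in> measurable \<Omega> lborel"
    and law: "distr \<Omega> lborel T = density lborel (\<lambda>x. ennreal (joint_dens \<rho> abar \<beta> x))"
  shows "integrable \<Omega> (\<lambda>\<omega>. kl_post (fst (snd (T \<omega>))) (snd (snd (T \<omega>))))"
proof (rule Bochner_Integration.integrable_bound)
  interpret prob_space \<Omega> by fact
  have [measurable]: "T \<in> measurable \<Omega> (borel \<Otimes>\<^sub>M (borel \<Otimes>\<^sub>M borel))"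
    using T by (simp add: borel_prod)
  have "integrable \<Omega> (\<lambda>\<omega>. (fst (snd (T \<omega>)))\<^sup>2)"
    using nn_integral_joint_dens_fst_snd[of power2] nn_integral_std_gauss_dens_second_moment
    by (intro integrable_comp_of_distr_density[OF T law, of "\<lambda>x. (fst (snd x))\<^sup>2"])
      (simp_all, unfold borel_prod[symmetric], measurable)
  moreover have "integrable \<Omega> (\<lambda>\<omega>. (snd (snd (T \<omega>)))\<^sup>2)"
    using nn_integral_joint_dens_snd_snd[of power2] nn_integral_std_gauss_dens_second_moment
    by (intro integrable_comp_of_distr_density[OF T law, of "\<lambda>x. (snd (snd x))\<^sup>2"])
      (simp_all, unfold borel_prod[symmetric], measurable)
  ultimately show "integrable \<Omega> (\<lambda>\<omega>. \<bar>kl_const\<bar> + (coef_y\<^sup>2 / \<beta>) * (fst (snd (T \<omega>)))\<^sup>2 + (coef_m\<^sup>2 / \<beta>) * (snd (snd (T \<omega>)))\<^sup>2)"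
    by (intro Bochner_Integration.integrable_add integrable_mult_right) auto
  show "(\<lambda>\<omega>. kl_post (fst (snd (T \<omega>))) (snd (snd (T \<omega>)))) \<in> borel_measurable \<Omega>"
    by measurable
  show "AE \<omega> in \<Omega>. norm (kl_post (fst (snd (T \<omega>))) (snd (snd (T \<omega>))))
      \<le> norm (\<bar>kl_const\<bar> + (coef_y\<^sup>2 / \<beta>) * (fst (snd (T \<omega>)))\<^sup>2 + (coef_m\<^sup>2 / \<beta>) * (snd (snd (T \<omega>)))\<^sup>2)"
    using abs_kl_post_le beta_pos by (intro AE_I2) (smt (verit) real_norm_def zero_le_power2 divide_nonneg_pos mult_nonneg_nonneg)
qed

end

lemma distr_triple_eq_density_joint_dens:
  assumes [measurable]: "XM \<in> borel_measurable \<Omega>" "XS0 \<in> borel_measurable \<Omega>"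
    "XSt \<in> borel_measurable \<Omega>" "XSt1 \<in> borel_measurable \<Omega>"
    and "\<bar>\<rho>\<bar> \<le> 1" "0 < \<beta>" "\<beta> < 1" "0 < abar" "abar < 1"
    and law: "distr \<Omega> borel (\<lambda>\<omega>. (XM \<omega>, XS0 \<omega>, XSt \<omega>, XSt1 \<omega>)) = model_law \<rho> abar \<beta>"
  shows "distr \<Omega> lborel (\<lambda>\<omega>. (XSt \<omega>, XSt1 \<omega>, XM \<omega>)) = density lborel (\<lambda>x. ennreal (joint_dens \<rho> abar \<beta> x))"
proof -
  have "distr \<Omega> lborel (\<lambda>\<omega>. (XSt \<omega>, XSt1 \<omega>, XM \<omega>))
      = distr (distr \<Omega> borel (\<lambda>\<omega>. (XM \<omega>, XS0 \<omega>, XSt \<omega>, XSt1 \<omega>))) lborel (\<lambda>(m, s0, st, st1). (st, st1, m))"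
    by (subst distr_distr) (simp_all add: comp_def, unfold borel_prod[symmetric], measurable)
  then show ?thesis
    using assms(5-9) by (simp add: law distr_model_law_triple)
qed

theorem corollary1:
  fixes \<Omega> :: "'a measure"
    and XM XS0 XSt XSt1 :: "'a \<Rightarrow> real"
    and f :: "real \<times> real \<times> real \<Rightarrow> ennreal"
    and \<rho> abar \<beta> :: real
  assumes "prob_space \<Omega>"
    and "XM \<in> borel_measurable \<Omega>" "XS0 \<in> borel_measurable \<Omega>"
    and "XSt \<in> borel_measurable \<Omega>" "XSt1 \<in> borel_measurable \<Omega>"
    and "\<bar>\<rho>\<bar> \<le> 1"
    and "0 < \<beta>" "\<beta> < 1" "0 < abar" "abar < 1"
    and "distr \<Omega> borel (\<lambda>\<omega>. (XM \<omega>, XS0 \<omega>, XSt \<omega>, XSt1 \<omega>)) = model_law \<rho> abar \<beta>"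
    and "distributed \<Omega> lborel (\<lambda>\<omega>. (XSt \<omega>, XSt1 \<omega>, XM \<omega>)) f"
  shows "(\<integral>\<omega>. kl_div (\<lambda>st. cond_dens_full f st (XSt1 \<omega>) (XM \<omega>))
                     (\<lambda>st. cond_dens_marg f st (XSt1 \<omega>)) \<partial>\<Omega>)
         \<ge> - (1/2) * (ln (1 - \<beta> * abar * \<rho>\<^sup>2) + \<beta> * abar * \<rho>\<^sup>2)"
proof -
  interpret forward_step \<rho> abar \<beta>
    using assms(6-10) by unfold_locales
  interpret prob_space \<Omega>
    by (fact assms(1))
  note [measurable] = assms(2-5)
  define T where "T = (\<lambda>\<omega>. (XSt \<omega>, XSt1 \<omega>, XM \<omega>))"
  define KL where "KL \<omega> = kl_div (\<lambda>st. cond_dens_full f st (XSt1 \<omega>) (XM \<omega>)) (\<lambda>st. cond_dens_marg f st (XSt1 \<omega>))" for \<omega>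
  have T: "T \<in> measurable \<Omega> lborel"
    unfolding T_def by simp
  have law: "distr \<Omega> lborel T = density lborel (\<lambda>x. ennreal (joint_dens \<rho> abar \<beta> x))"
    unfolding T_def using assms(2-11) by (rule distr_triple_eq_density_joint_dens)
  have f: "f \<in> borel_measurable borel" and "distr \<Omega> lborel T = density lborel f"
    using assms(12) by (simp_all add: distributed_def T_def)
  then have "AE x in lborel. f x = ennreal (joint_dens \<rho> abar \<beta> x)"
    using law by (intro sigma_finite_measure.density_unique[OF lborel.sigma_finite_measure_axioms]) simp_all
  from AE_comp_of_distr_density[OF T law _ _ AE_kl_cond_dens_eq_kl_post[OF f this]]
  have "AE \<omega> in \<Omega>. KL \<omega> = kl_post (XSt1 \<omega>) (XM \<omega>)"
    using borel_measurable_kl_cond_dens[OF f] by (simp add: T_def KL_def, unfold borel_prod[symmetric], measurable)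
  then have "(\<integral>\<omega>. KL \<omega> \<partial>\<Omega>) = (\<integral>\<omega>. kl_post (XSt1 \<omega>) (XM \<omega>) \<partial>\<Omega>)"
    using measurable_compose[OF _ borel_measurable_kl_cond_dens[OF f], of "\<lambda>\<omega>. (XSt1 \<omega>, XM \<omega>)"]
    by (intro integral_cong_AE) (simp_all add: KL_def)
  moreover have "(\<integral>\<omega>. kl_post (XSt1 \<omega>) (XM \<omega>) \<partial>\<Omega>) \<ge> - (1/2) * (ln (1 - \<beta> * abar * \<rho>\<^sup>2) + \<beta> * abar * \<rho>\<^sup>2)"
    using integral_mono[OF _ integrable_kl_post[OF assms(1) T law] kl_post_lower_bound]
    by (simp add: T_def prob_space)
  ultimately show ?thesis
    by (simp add: KL_def)
qed

end
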